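(* Let $M\in S_d^+$, let $z,v\in\mathbb R^d\setminus\{0\}$ and $\theta_0\in[0,\pi/2]$ be such that $\langle v,z-v\rangle_M\ge\cos(\theta_0)\|v\|_M\|z-v\|_M$. Then $$\|z-v\|_M\le\|z\|_M-\frac{\langle z,v\rangle_M}{\|z\|_M}+\frac{(\sin\theta_0)^2\|v\|_M^2}{\|z\|_M}.$$
   Context: $S_d^+$ is the set of $d\times d$ symmetric positive definite matrices; $\langle u,v\rangle_M:=u^TMv$, $\|u\|_M:=\sqrt{\langle u,u\rangle_M}$. *)

theory Defs
  imports "HOL-Analysis.Analysis"
begin

definition sym_posdef :: "real^'n^'n \<Rightarrow> bool" where
  "sym_posdef M \<longleftrightarrow> transpose M = M \<and> (\<forall>x. x \<noteq> 0 \<longrightarrow> x \<bullet> (M *v x) > 0)"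

definition inner_M :: "real^'n^'n \<Rightarrow> real^'n \<Rightarrow> real^'n \<Rightarrow> real" where
  "inner_M M u v = u \<bullet> (M *v v)"

definition norm_M :: "real^'n^'n \<Rightarrow> real^'n \<Rightarrow> real" where
  "norm_M M u = sqrt (inner_M M u u)"

end

theory Submission
  imports Defs
begin

text \<open>Writing \<open>w = z - v\<close>, \<open>a = \<parallel>v\<parallel>\<^sub>M\<close>, \<open>b = \<parallel>w\<parallel>\<^sub>M\<close>, \<open>p = \<langle>v,w\<rangle>\<^sub>M\<close>, we have
  \<open>\<parallel>z\<parallel>\<^sub>M\<^sup>2 = a\<^sup>2 + 2p + b\<^sup>2\<close> and \<open>\<langle>z,v\<rangle>\<^sub>M = a\<^sup>2 + p\<close>, so after multiplying by \<open>\<parallel>z\<parallel>\<^sub>M\<close> the claim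
  becomes \<open>b \<parallel>z\<parallel>\<^sub>M \<le> p + b\<^sup>2 + sin\<^sup>2\<theta>\<^sub>0 a\<^sup>2\<close>. Both sides are nonnegative, and after squaring
  the difference is a sum of nonnegative terms once \<open>p\<^sup>2 \<ge> cos\<^sup>2\<theta>\<^sub>0 a\<^sup>2 b\<^sup>2 = (1 - sin\<^sup>2\<theta>\<^sub>0) a\<^sup>2 b\<^sup>2\<close>
  is used.\<close>

lemma inner_M_commute:
  assumes "transpose M = M"
  shows "inner_M M u w = inner_M M w u"
proof -
  have "u \<bullet> (M *v w) = (u v* M) \<bullet> w" by (simp add: dot_lmul_matrix)
  also have "u v* M = transpose M *v u" by (metis transpose_transpose vector_transpose_matrix)
  finally show ?thesis using assms unfolding inner_M_def by (simp add: inner_commute)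
qed

lemma inner_M_diff_right: "inner_M M u (w - x) = inner_M M u w - inner_M M u x"
  unfolding inner_M_def by (simp add: matrix_vector_mult_diff_distrib inner_diff_right)

lemma inner_M_diff_left: "inner_M M (w - x) u = inner_M M w u - inner_M M x u"
  unfolding inner_M_def by (simp add: inner_diff_left)

lemma inner_M_self_pos:
  assumes "sym_posdef M" "x \<noteq> 0"
  shows "inner_M M x x > 0"
  using assms unfolding sym_posdef_def inner_M_def by auto

lemma inner_M_self_nonneg:
  assumes "sym_posdef M"
  shows "inner_M M x x \<ge> 0"
proof (cases "x = 0")
  case True
  then show ?thesis by (simp add: inner_M_def)
next
  case False
  then show ?thesis using inner_M_self_pos[OF assms] less_imp_le by blast
qed

lemma norm_M_nonneg:
  assumes "sym_posdef M"
  shows "norm_M M x \<ge> 0"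
  using inner_M_self_nonneg[OF assms] unfolding norm_M_def by simp

lemma norm_M_pos:
  assumes "sym_posdef M" "x \<noteq> 0"
  shows "norm_M M x > 0"
  using inner_M_self_pos[OF assms] unfolding norm_M_def by simp

lemma power2_norm_M:
  assumes "sym_posdef M"
  shows "(norm_M M x)\<^sup>2 = inner_M M x x"
  using inner_M_self_nonneg[OF assms] unfolding norm_M_def by simp

lemma power2_norm_M_add_diff:
  assumes "sym_posdef M"
  shows "(norm_M M z)\<^sup>2 = (norm_M M v)\<^sup>2 + 2 * inner_M M v (z - v) + (norm_M M (z - v))\<^sup>2"
  using inner_M_commute[of M z v] assms
  unfolding power2_norm_M[OF assms] inner_M_diff_right inner_M_diff_left sym_posdef_def
  by simp

lemma inner_M_eq_power2_norm_M_add_diff: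
  assumes "sym_posdef M"
  shows "inner_M M z v = (norm_M M v)\<^sup>2 + inner_M M v (z - v)"
  using inner_M_commute[of M z v] assms
  unfolding power2_norm_M[OF assms] inner_M_diff_right sym_posdef_def
  by simp

lemma angle_bound_squared:
  fixes a b c s p N :: real
  assumes "0 \<le> a" "0 \<le> b" "0 \<le> c" "0 \<le> N" "c\<^sup>2 + s\<^sup>2 = 1"
    and "c * a * b \<le> p" "N\<^sup>2 = a\<^sup>2 + 2 * p + b\<^sup>2"
  shows "b * N \<le> p + b\<^sup>2 + s\<^sup>2 * a\<^sup>2"
proof -
  have p_nonneg: "0 \<le> p" using assms by (meson mult_nonneg_nonneg order_trans)
  have "(c * a * b)\<^sup>2 \<le> p\<^sup>2" using assms by (intro power_mono) auto
  moreover have "c\<^sup>2 = 1 - s\<^sup>2" using assms(5) by simp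
  ultimately have p_sq: "(1 - s\<^sup>2) * a\<^sup>2 * b\<^sup>2 \<le> p\<^sup>2"
    by (simp add: power_mult_distrib)
  define r where "r = s\<^sup>2 * a\<^sup>2"
  have r_nonneg: "0 \<le> r" unfolding r_def by simp
  have "(b * N)\<^sup>2 = b\<^sup>2 * a\<^sup>2 + 2 * p * b\<^sup>2 + b\<^sup>2 * b\<^sup>2"
    by (simp add: power_mult_distrib assms(7) algebra_simps)
  also have "\<dots> \<le> (p + b\<^sup>2 + r)\<^sup>2 - (r * b\<^sup>2 + 2 * r * p + r\<^sup>2)"
    using p_sq unfolding r_def by (simp add: power2_eq_square algebra_simps)
  also have "\<dots> \<le> (p + b\<^sup>2 + r)\<^sup>2"
    using mult_nonneg_nonneg[OF r_nonneg p_nonneg] mult_nonneg_nonneg[OF r_nonneg zero_le_power2[of b]]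
      zero_le_power2[of r]
    by linarith
  finally have "(b * N)\<^sup>2 \<le> (p + b\<^sup>2 + r)\<^sup>2" .
  moreover have "0 \<le> p + b\<^sup>2 + r" using p_nonneg r_nonneg by simp
  ultimately show ?thesis unfolding r_def by (rule power2_le_imp_le)
qed

theorem lemma1p7:
  fixes M :: "real^'n^'n" and z v :: "real^'n" and \<theta>\<^sub>0 :: real
  assumes "sym_posdef M"
    and "z \<noteq> 0" and "v \<noteq> 0"
    and "0 \<le> \<theta>\<^sub>0" and "\<theta>\<^sub>0 \<le> pi / 2"
    and "inner_M M v (z - v) \<ge> cos \<theta>\<^sub>0 * norm_M M v * norm_M M (z - v)"
  shows "norm_M M (z - v) \<le> norm_M M z - inner_M M z v / norm_M M z
           + (sin \<theta>\<^sub>0)\<^sup>2 * (norm_M M v)\<^sup>2 / norm_M M z"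
proof -
  let ?a = "norm_M M v" and ?b = "norm_M M (z - v)" and ?N = "norm_M M z"
    and ?p = "inner_M M v (z - v)"
  have N_pos: "?N > 0" using norm_M_pos[OF assms(1,2)] .
  have "?b * ?N \<le> ?p + ?b\<^sup>2 + (sin \<theta>\<^sub>0)\<^sup>2 * ?a\<^sup>2"
    using assms(4-6) norm_M_nonneg[OF assms(1)] power2_norm_M_add_diff[OF assms(1)]
    by (intro angle_bound_squared[where c = "cos \<theta>\<^sub>0"]) (auto simp: cos_ge_zero)
  then have "?b * ?N \<le> ?N\<^sup>2 - inner_M M z v + (sin \<theta>\<^sub>0)\<^sup>2 * ?a\<^sup>2"
    using power2_norm_M_add_diff[OF assms(1), of z v] inner_M_eq_power2_norm_M_add_diff[OF assms(1), of z v]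
    by linarith
  with N_pos have "?b \<le> (?N\<^sup>2 - inner_M M z v + (sin \<theta>\<^sub>0)\<^sup>2 * ?a\<^sup>2) / ?N"
    by (simp add: pos_le_divide_eq)
  also have "\<dots> = ?N - inner_M M z v / ?N + (sin \<theta>\<^sub>0)\<^sup>2 * ?a\<^sup>2 / ?N"
    using N_pos by (simp add: diff_divide_distrib add_divide_distrib power2_eq_square)
  finally show ?thesis .
qed

end
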